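(* Let $A$ be an infinite set and $I$ a set. The family of projections $(\pi_{i})_{i\in I}$, where $\pi_{i}:A^{I}\to A$, $\pi_{i}(f)=f(i)$, consists of elements of $\mathbf{F}(A,I)$ and freely generates $\mathbf{F}(A,I)$ with respect to the variety $V(\Omega(A))$.
   Context: For each $a\in A$ let $\hat{a}$ be a constant symbol, and for each $n\geq1$ and each $f:A^{n}\to A$ let $\hat{f}$ be an $n$-ary operation symbol. $\Omega(A)$ is the algebra with universe $A$ in which $\hat{a}$ is interpreted as $a$ and $\hat{f}$ as $f$; $V(\Omega(A))$ is the variety it generates. For a set $X$, $\Pi(X)$ is the lattice of partitions of $X$ (ordered by refinement); for $h:X\to Y$, $\Pi(h)$ is the partition of $X$ into nonempty fibers of $h$. For a filter $F$ on $\Pi(X)$, $\Omega(A)^{F}=\{h\in A^{X}:\Pi(h)\in F\}$, a subalgebra of $\Omega(A)^{X}$. For $i_{1},\dots,i_{n}\in I$, $\mathcal{P}_{i_{1},\dots,i_{n}}$ is the partition of $A^{I}$ in which $f,g$ lie in the same block iff $f(i_{k})=g(i_{k})$ for $k=1,\dots,n$. $\mathcal{P}(A,I)$ is the filter on $\Pi(A^{I})$ generated by all such partitions (i.e., all partitions of $A^{I}$ coarser than some $\mathcal{P}_{i_{1},\dots,i_{n}}$), and $\mathbf{F}(A,I)=\Omega(A)^{\mathcal{P}(A,I)}$. *)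

theory Defs
  imports Main "HOL-Library.FuncSet"
begin

(* The set A is represented by the universe of a type 'a (assumed infinite).
   Operation symbols of Omega(A): a constant symbol for each a \<in> A, and for
   each n \<ge> 1 and each f : A^n \<rightarrow> A an n-ary symbol.  An n-ary operation
   A^n \<rightarrow> A is represented canonically as a function on lists which is
   'undefined' on lists of length \<noteq> n. *)

datatype 'a osym = Cst 'a | Opr nat "'a list \<Rightarrow> 'a"

fun arity :: "'a osym \<Rightarrow> nat" where
  "arity (Cst a) = 0"
| "arity (Opr n f) = n"

fun valid_sym :: "'a osym \<Rightarrow> bool" where
  "valid_sym (Cst a) = True"
| "valid_sym (Opr n f) = (1 \<le> n \<and> (\<forall>xs. length xs \<noteq> n \<longrightarrow> f xs = undefined))"

type_synonym ('a, 'b) alg = "'b set \<times> ('a osym \<Rightarrow> 'b list \<Rightarrow> 'b)"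

definition is_alg :: "('a, 'b) alg \<Rightarrow> bool" where
  "is_alg B \<longleftrightarrow> (\<forall>s xs. valid_sym s \<and> length xs = arity s \<and> set xs \<subseteq> fst B
      \<longrightarrow> snd B s xs \<in> fst B)"

fun omega_op :: "'a osym \<Rightarrow> 'a list \<Rightarrow> 'a" where
  "omega_op (Cst a) xs = a"
| "omega_op (Opr n f) xs = f xs"

definition Omega :: "('a, 'a) alg" where
  "Omega = (UNIV, omega_op)"

definition Omega_pow :: "'x set \<Rightarrow> ('a, 'x \<Rightarrow> 'a) alg" where
  "Omega_pow X = (X \<rightarrow>\<^sub>E (UNIV :: 'a set),
                  \<lambda>s hs. \<lambda>x\<in>X. omega_op s (map (\<lambda>h. h x) hs))"

definition subuniverse :: "'b set \<Rightarrow> ('a, 'b) alg \<Rightarrow> bool" where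
  "subuniverse C B \<longleftrightarrow> C \<subseteq> fst B \<and>
     (\<forall>s xs. valid_sym s \<and> length xs = arity s \<and> set xs \<subseteq> C \<longrightarrow> snd B s xs \<in> C)"

definition hom :: "('b \<Rightarrow> 'c) \<Rightarrow> ('a, 'b) alg \<Rightarrow> ('a, 'c) alg \<Rightarrow> bool" where
  "hom \<phi> B C \<longleftrightarrow> (\<forall>x\<in>fst B. \<phi> x \<in> fst C) \<and>
     (\<forall>s xs. valid_sym s \<and> length xs = arity s \<and> set xs \<subseteq> fst B
        \<longrightarrow> \<phi> (snd B s xs) = snd C s (map \<phi> xs))"

definition Sg :: "('a, 'b) alg \<Rightarrow> 'b set \<Rightarrow> 'b set" where
  "Sg B X = \<Inter>{C. subuniverse C B \<and> X \<subseteq> C}"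

(* B \<in> HSP(Omega(A)) = V(Omega(A)), with the product index set J drawn from type 'j:
   B is a homomorphic image of a subalgebra of a power Omega(A)^J. *)
definition in_var :: "'j itself \<Rightarrow> ('a, 'b) alg \<Rightarrow> bool" where
  "in_var (_ :: 'j itself) B \<longleftrightarrow> is_alg B \<and>
     (\<exists>(J :: 'j set) C \<phi>. subuniverse C (Omega_pow J :: ('a, 'j \<Rightarrow> 'a) alg) \<and>
        hom \<phi> (C, snd (Omega_pow J :: ('a, 'j \<Rightarrow> 'a) alg)) B \<and> \<phi> ` C = fst B)"

definition is_partition :: "'x set \<Rightarrow> 'x set set \<Rightarrow> bool" where
  "is_partition X P \<longleftrightarrow> (\<forall>p\<in>P. p \<noteq> {} \<and> p \<subseteq> X) \<and> (\<forall>x\<in>X. \<exists>!p. p \<in> P \<and> x \<in> p)"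

definition fiber_partition :: "'x set \<Rightarrow> ('x \<Rightarrow> 'y) \<Rightarrow> 'x set set" where
  "fiber_partition X h = {{x \<in> X. h x = h y} | y. y \<in> X}"

definition coarser :: "'x set set \<Rightarrow> 'x set set \<Rightarrow> bool" where
  "coarser P Q \<longleftrightarrow> (\<forall>p\<in>P. \<exists>q\<in>Q. p \<subseteq> q)"

definition powA :: "'i set \<Rightarrow> ('i \<Rightarrow> 'a) set" where
  "powA I = I \<rightarrow>\<^sub>E (UNIV :: 'a set)"

definition proj_partition :: "'i set \<Rightarrow> 'i list \<Rightarrow> ('i \<Rightarrow> 'a) set set" where
  "proj_partition I is = {{g \<in> powA I. \<forall>k\<in>set is. g k = f k} | f. f \<in> powA I}"

definition PAI :: "'i set \<Rightarrow> ('i \<Rightarrow> 'a) set set set" where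
  "PAI I = {Q. is_partition (powA I) Q \<and>
               (\<exists>is. set is \<subseteq> I \<and> coarser (proj_partition I is) Q)}"

definition Omega_filt :: "'x set \<Rightarrow> 'x set set set \<Rightarrow> ('a, 'x \<Rightarrow> 'a) alg" where
  "Omega_filt X F = ({h \<in> fst (Omega_pow X :: ('a, 'x \<Rightarrow> 'a) alg). fiber_partition X h \<in> F},
                     snd (Omega_pow X :: ('a, 'x \<Rightarrow> 'a) alg))"

definition FAI :: "'i set \<Rightarrow> ('a, ('i \<Rightarrow> 'a) \<Rightarrow> 'a) alg" where
  "FAI I = Omega_filt (powA I) (PAI I)"

definition proj :: "'i set \<Rightarrow> 'i \<Rightarrow> ('i \<Rightarrow> 'a) \<Rightarrow> 'a" where
  "proj I i = (\<lambda>f\<in>powA I. f i)"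

end

theory Submission
  imports Defs
begin

text \<open>
  An element of \<open>\<F>(A,I)\<close> is exactly a function \<open>h : A\<^sup>I \<rightarrow> A\<close> that depends on only
  finitely many coordinates \<open>i\<^sub>1, \<dots>, i\<^sub>n \<in> I\<close>.  Such an \<open>h\<close> factors as
  \<open>h = f(\<pi>\<^bsub>i\<^sub>1\<^esub>, \<dots>, \<pi>\<^bsub>i\<^sub>n\<^esub>)\<close> for an \<open>n\<close>-ary operation \<open>f\<close> of \<open>\<Omega>(A)\<close>, and \<open>\<Omega>(A)\<close> has every
  operation as a fundamental operation, so the projections generate \<open>\<F>(A,I)\<close>; being a
  subalgebra of \<open>\<Omega>(A)\<^bsup>A\<^sup>I\<^esup>\<close>, it lies in the variety.  For freeness, let \<open>B\<close> be the image of
  a subalgebra \<open>C \<le> \<Omega>(A)\<^sup>J\<close> under \<open>\<psi>\<close>, and lift the prescribed values to \<open>c\<^sub>i \<in> C\<close>.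
  Evaluation at the points \<open>e\<^sub>j = (c\<^sub>i(j))\<^sub>i\<^sub>\<in>\<^sub>I\<close> of \<open>A\<^sup>I\<close> is a homomorphism
  \<open>\<F>(A,I) \<rightarrow> \<Omega>(A)\<^sup>J\<close> sending \<open>\<pi>\<^sub>i\<close> to \<open>c\<^sub>i\<close>, so by generation it lands in \<open>C\<close>;
  composing with \<open>\<psi>\<close> gives the extension, which is unique again by generation.
\<close>

lemma subuniverse_carrier_iff_is_alg: "subuniverse (fst B) B \<longleftrightarrow> is_alg B"
  unfolding subuniverse_def is_alg_def by blast

lemma Sg_eqI:
  assumes "is_alg B" and "X \<subseteq> fst B"
    and "\<And>C. subuniverse C B \<Longrightarrow> X \<subseteq> C \<Longrightarrow> fst B \<subseteq> C"
  shows "Sg B X = fst B"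
proof
  show "Sg B X \<subseteq> fst B"
    unfolding Sg_def using assms(1,2) subuniverse_carrier_iff_is_alg by blast
  show "fst B \<subseteq> Sg B X"
    unfolding Sg_def using assms(3) by blast
qed

lemma hom_id: "hom id B B"
  unfolding hom_def by simp

lemma hom_comp:
  fixes A :: "('s, 'a) alg"
  assumes f: "hom f A B" and g: "hom g B C"
  shows "hom (g \<circ> f) A C"
  unfolding hom_def
proof (intro conjI ballI allI impI)
  fix s :: "'s osym" and xs
  assume s: "valid_sym s \<and> length xs = arity s \<and> set xs \<subseteq> fst A"
  then have "set (map f xs) \<subseteq> fst B" using f unfolding hom_def by auto
  then show "(g \<circ> f) (snd A s xs) = snd C s (map (g \<circ> f) xs)"
    using f g s unfolding hom_def by simp
qed (use f g in \<open>auto simp: hom_def\<close>)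

lemma hom_restrict:
  fixes A :: "('s, 'a) alg"
  assumes "is_alg A" and "hom f A B"
  shows "hom (restrict f (fst A)) A B"
  unfolding hom_def
proof (intro conjI ballI allI impI)
  fix s :: "'s osym" and xs
  assume s: "valid_sym s \<and> length xs = arity s \<and> set xs \<subseteq> fst A"
  then have "map (restrict f (fst A)) xs = map f xs" by auto
  then show "restrict f (fst A) (snd A s xs) = snd B s (map (restrict f (fst A)) xs)"
    using assms s unfolding hom_def is_alg_def by (simp del: map_eq_conv)
qed (use assms in \<open>auto simp: hom_def\<close>)

lemma hom_into_subuniverse:
  "hom f A B \<Longrightarrow> f ` fst A \<subseteq> C \<Longrightarrow> hom f A (C, snd B)"
  unfolding hom_def by auto

lemma subuniverse_vimage_hom:
  fixes A :: "('s, 'a) alg"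
  assumes A: "is_alg A" and f: "hom f A B" and C: "subuniverse C B"
  shows "subuniverse {x \<in> fst A. f x \<in> C} A"
  unfolding subuniverse_def
proof (intro conjI allI impI)
  fix s :: "'s osym" and xs
  assume s: "valid_sym s \<and> length xs = arity s \<and> set xs \<subseteq> {x \<in> fst A. f x \<in> C}"
  have "set (map f xs) \<subseteq> C" using s by auto
  then have "snd B s (map f xs) \<in> C" using C s unfolding subuniverse_def by auto
  moreover have "f (snd A s xs) = snd B s (map f xs)" using f s unfolding hom_def by auto
  moreover have "snd A s xs \<in> fst A" using A s unfolding is_alg_def by auto
  ultimately show "snd A s xs \<in> {x \<in> fst A. f x \<in> C}" by simp
qed blast

lemma subuniverse_equalizer_hom:
  fixes A :: "('s, 'a) alg"
  assumes A: "is_alg A" and f: "hom f A B" and g: "hom g A B"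
  shows "subuniverse {x \<in> fst A. f x = g x} A"
  unfolding subuniverse_def
proof (intro conjI allI impI)
  fix s :: "'s osym" and xs
  assume s: "valid_sym s \<and> length xs = arity s \<and> set xs \<subseteq> {x \<in> fst A. f x = g x}"
  have "snd A s xs \<in> fst A" using A s unfolding is_alg_def by auto
  moreover have "f (snd A s xs) = snd B s (map f xs)" using f s unfolding hom_def by auto
  moreover have "g (snd A s xs) = snd B s (map g xs)" using g s unfolding hom_def by auto
  moreover have "map f xs = map g xs" using s by auto
  ultimately show "snd A s xs \<in> {x \<in> fst A. f x = g x}" by simp
qed blast

lemma fst_Omega_pow [simp]: "fst (Omega_pow X) = X \<rightarrow>\<^sub>E UNIV"
  unfolding Omega_pow_def by simp

lemma snd_Omega_pow [simp]:
  "snd (Omega_pow X) s hs = (\<lambda>x\<in>X. omega_op s (map (\<lambda>h. h x) hs))"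
  unfolding Omega_pow_def by simp

lemma hom_Omega_pow_precomp:
  fixes e :: "'j \<Rightarrow> 'x" and D :: "('x \<Rightarrow> 'a) set"
  assumes "e ` J \<subseteq> X"
  shows "hom (\<lambda>h. \<lambda>j\<in>J. h (e j)) (D, snd (Omega_pow X)) (Omega_pow J)"
  unfolding hom_def snd_conv
proof (intro conjI ballI allI impI)
  fix s :: "'a osym" and hs :: "('x \<Rightarrow> 'a) list"
  show "(\<lambda>j\<in>J. snd (Omega_pow X) s hs (e j)) =
      snd (Omega_pow J) s (map (\<lambda>h. \<lambda>j\<in>J. h (e j)) hs)"
    unfolding snd_Omega_pow
  proof (rule restrict_ext)
    fix j assume "j \<in> J"
    then show "(\<lambda>x\<in>X. omega_op s (map (\<lambda>h. h x) hs)) (e j) =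
        omega_op s (map (\<lambda>h. h j) (map (\<lambda>h. \<lambda>j\<in>J. h (e j)) hs))"
      using assms by (simp add: comp_def image_subset_iff)
  qed
qed simp

subsection \<open>The elements of \<open>\<F>(A,I)\<close>\<close>

definition depends_on :: "'i set \<Rightarrow> (('i \<Rightarrow> 'a) \<Rightarrow> 'c) \<Rightarrow> 'i set \<Rightarrow> bool" where
  "depends_on I h K \<longleftrightarrow> (\<forall>f\<in>powA I. \<forall>g\<in>powA I. (\<forall>k\<in>K. f k = g k) \<longrightarrow> h f = h g)"

lemma depends_on_mono: "depends_on I h K \<Longrightarrow> K \<subseteq> K' \<Longrightarrow> depends_on I h K'"
  unfolding depends_on_def by blast

lemma depends_on_Omega_pow_op:
  fixes I :: "'i set" and hs :: "(('i \<Rightarrow> 'a) \<Rightarrow> 'a) list"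
  assumes "\<forall>h\<in>set hs. depends_on I h K"
  shows "depends_on I (snd (Omega_pow (powA I)) s hs) K"
  unfolding depends_on_def
proof (intro ballI impI)
  fix f g :: "'i \<Rightarrow> 'a"
  assume f: "f \<in> powA I" and g: "g \<in> powA I" and fg: "\<forall>k\<in>K. f k = g k"
  have "map (\<lambda>h. h f) hs = map (\<lambda>h. h g) hs"
    using assms f g fg unfolding depends_on_def by auto
  then show "snd (Omega_pow (powA I)) s hs f = snd (Omega_pow (powA I)) s hs g"
    using f g by (simp del: map_eq_conv)
qed

lemma is_partition_fiber_partition: "is_partition X (fiber_partition X h)"
  unfolding is_partition_def fiber_partition_def by auto

lemma coarser_proj_partition_iff_depends_on:
  fixes h :: "('i \<Rightarrow> 'a) \<Rightarrow> 'c"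
  shows "coarser (proj_partition I is) (fiber_partition (powA I) h) \<longleftrightarrow> depends_on I h (set is)"
proof
  assume coarser: "coarser (proj_partition I is) (fiber_partition (powA I) h)"
  show "depends_on I h (set is)"
    unfolding depends_on_def
  proof (intro ballI impI)
    fix f g :: "'i \<Rightarrow> 'a"
    assume f: "f \<in> powA I" and g: "g \<in> powA I" and fg: "\<forall>k\<in>set is. f k = g k"
    have "{g' \<in> powA I. \<forall>k\<in>set is. g' k = f k} \<in> proj_partition I is"
      using f unfolding proj_partition_def by blast
    then obtain y where y: "{g' \<in> powA I. \<forall>k\<in>set is. g' k = f k} \<subseteq> {x \<in> powA I. h x = h y}"
      using coarser unfolding coarser_def fiber_partition_def by blast
    have "h f = h y" using subsetD[OF y, of f] f by simp
    moreover have "h g = h y" using subsetD[OF y, of g] g fg by simp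
    ultimately show "h f = h g" by simp
  qed
next
  assume dep: "depends_on I h (set is)"
  show "coarser (proj_partition I is) (fiber_partition (powA I) h)"
    unfolding coarser_def
  proof
    fix p :: "('i \<Rightarrow> 'a) set" assume "p \<in> proj_partition I is"
    then obtain f where f: "f \<in> powA I" and p: "p = {g \<in> powA I. \<forall>k\<in>set is. g k = f k}"
      unfolding proj_partition_def by blast
    have "p \<subseteq> {x \<in> powA I. h x = h f}"
    proof
      fix x assume "x \<in> p"
      then have x: "x \<in> powA I" "\<forall>k\<in>set is. x k = f k" unfolding p by auto
      then have "h x = h f" using dep f unfolding depends_on_def by blast
      with x show "x \<in> {x \<in> powA I. h x = h f}" by simp
    qed
    moreover have "{x \<in> powA I. h x = h f} \<in> fiber_partition (powA I) h"
      using f unfolding fiber_partition_def by blast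
    ultimately show "\<exists>q\<in>fiber_partition (powA I) h. p \<subseteq> q" by blast
  qed
qed

lemma FAI_eq:
  "FAI I = ({h \<in> extensional (powA I). \<exists>is. set is \<subseteq> I \<and> depends_on I h (set is)},
            snd (Omega_pow (powA I)))"
proof -
  have "{h \<in> powA I \<rightarrow>\<^sub>E UNIV. fiber_partition (powA I) h \<in> PAI I}
      = {h \<in> extensional (powA I). \<exists>is. set is \<subseteq> I \<and> depends_on I h (set is)}"
    unfolding PAI_def coarser_proj_partition_iff_depends_on[symmetric]
    by (auto simp: PiE_def is_partition_fiber_partition)
  then show ?thesis
    unfolding FAI_def Omega_filt_def by simp
qed

lemma mem_FAI_iff:
  "h \<in> fst (FAI I) \<longleftrightarrow> h \<in> extensional (powA I) \<and> (\<exists>is. set is \<subseteq> I \<and> depends_on I h (set is))"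
  by (simp add: FAI_eq)

lemma snd_FAI: "snd (FAI I) = snd (Omega_pow (powA I))"
  by (simp add: FAI_eq)

lemma proj_in_FAI: "i \<in> I \<Longrightarrow> proj I i \<in> fst (FAI I)"
  unfolding mem_FAI_iff
  by (intro conjI exI[of _ "[i]"]) (auto simp: proj_def depends_on_def)

lemma is_alg_FAI: "is_alg (FAI I :: ('a, ('i \<Rightarrow> 'a) \<Rightarrow> 'a) alg)"
  unfolding is_alg_def
proof (intro allI impI)
  fix s :: "'a osym" and hs :: "(('i \<Rightarrow> 'a) \<Rightarrow> 'a) list"
  assume "valid_sym s \<and> length hs = arity s \<and> set hs \<subseteq> fst (FAI I)"
  then have "\<forall>h\<in>set hs. \<exists>is. set is \<subseteq> I \<and> depends_on I h (set is)"
    by (auto simp: mem_FAI_iff)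
  then obtain K where K: "\<And>h. h \<in> set hs \<Longrightarrow> set (K h) \<subseteq> I \<and> depends_on I h (set (K h))"
    by metis
  have "depends_on I (snd (Omega_pow (powA I)) s hs) (set (concat (map K hs)))"
    using K by (intro depends_on_Omega_pow_op) (auto intro: depends_on_mono)
  moreover have "set (concat (map K hs)) \<subseteq> I" using K by auto
  ultimately show "snd (FAI I) s hs \<in> fst (FAI I)"
    unfolding mem_FAI_iff snd_FAI snd_Omega_pow by (intro conjI restrict_extensional exI)
qed

lemma FAI_in_var: "in_var TYPE('i \<Rightarrow> 'a) (FAI I :: ('a, ('i \<Rightarrow> 'a) \<Rightarrow> 'a) alg)"
  unfolding in_var_def
proof (intro conjI is_alg_FAI exI)
  have "fst (FAI I) \<subseteq> fst (Omega_pow (powA I) :: ('a, ('i \<Rightarrow> 'a) \<Rightarrow> 'a) alg)"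
    by (auto simp: mem_FAI_iff PiE_def)
  then show "subuniverse (fst (FAI I)) (Omega_pow (powA I) :: ('a, ('i \<Rightarrow> 'a) \<Rightarrow> 'a) alg)"
    using is_alg_FAI[of I, unfolded is_alg_def snd_FAI] unfolding subuniverse_def by blast
  have "(fst (FAI I), snd (Omega_pow (powA I))) = FAI I" by (simp add: FAI_eq)
  then show "hom id (fst (FAI I), snd (Omega_pow (powA I))) (FAI I)"
    using hom_id by metis
qed simp

subsection \<open>The projections generate \<open>\<F>(A,I)\<close>\<close>

lemma depends_on_empty_eq_Cst:
  fixes I :: "'i set" and h :: "('i \<Rightarrow> 'a) \<Rightarrow> 'a"
  assumes "h \<in> extensional (powA I)" and "depends_on I h {}"
  obtains a where "h = snd (Omega_pow (powA I)) (Cst a) []"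
proof
  define x0 :: "'i \<Rightarrow> 'a" where "x0 = (\<lambda>i\<in>I. undefined)"
  have x0: "x0 \<in> powA I" unfolding powA_def x0_def by simp
  show "h = snd (Omega_pow (powA I)) (Cst (h x0)) []"
  proof
    fix x show "h x = snd (Omega_pow (powA I)) (Cst (h x0)) [] x"
      using assms(1) x0 assms(2)[unfolded depends_on_def, rule_format, of x x0]
      by (cases "x \<in> powA I") (auto simp: extensional_def)
  qed
qed

text \<open>\<open>SOME\<close> picks an arbitrary point of \<open>A\<^sup>I\<close> with the prescribed coordinates \<open>is\<close>;
  the choice is irrelevant because \<open>h\<close> depends on nothing else.\<close>

lemma depends_on_eq_Opr_projs:
  fixes h :: "('i \<Rightarrow> 'a) \<Rightarrow> 'a"
  assumes h: "h \<in> extensional (powA I)" and dep: "depends_on I h (set is)" and "is \<noteq> []"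
  obtains F where "valid_sym (Opr (length is) F)"
    and "h = snd (Omega_pow (powA I)) (Opr (length is) F) (map (proj I) is)"
proof
  define F where
    "F = (\<lambda>xs. if length xs = length is then h (SOME f. f \<in> powA I \<and> map f is = xs) else undefined)"
  show "valid_sym (Opr (length is) F)"
    using \<open>is \<noteq> []\<close> unfolding F_def by (cases "is") auto
  show "h = snd (Omega_pow (powA I)) (Opr (length is) F) (map (proj I) is)"
  proof
    fix x show "h x = snd (Omega_pow (powA I)) (Opr (length is) F) (map (proj I) is) x"
    proof (cases "x \<in> powA I")
      case True
      define f where "f = (SOME f. f \<in> powA I \<and> map f is = map x is)"
      have f: "f \<in> powA I \<and> map f is = map x is"
        unfolding f_def by (rule someI[of _ x]) (use True in simp)
      then have "\<forall>k\<in>set is. f k = x k" by simp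
      then have "h x = h f"
        using dep[unfolded depends_on_def, rule_format, of x f] f True by simp
      also have "\<dots> = F (map x is)" unfolding F_def f_def by simp
      also have "map x is = map (\<lambda>p. p x) (map (proj I) is)"
        using True by (simp add: proj_def)
      finally show ?thesis using True by (simp del: map_map)
    next
      case False
      then show ?thesis using h unfolding extensional_def by simp
    qed
  qed
qed

lemma FAI_subset_subuniverse:
  fixes C :: "(('i \<Rightarrow> 'a) \<Rightarrow> 'a) set"
  assumes C: "subuniverse C (FAI I)" and projs: "proj I ` I \<subseteq> C"
  shows "fst (FAI I) \<subseteq> C"
proof
  fix h :: "('i \<Rightarrow> 'a) \<Rightarrow> 'a" assume "h \<in> fst (FAI I)"
  then obtain "is" where h: "h \<in> extensional (powA I)" and "set is \<subseteq> I"
    and dep: "depends_on I h (set is)"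
    unfolding mem_FAI_iff by blast
  then have projs_is: "set (map (proj I) is) \<subseteq> C" using projs by auto
  have closed: "snd (Omega_pow (powA I)) s (map (proj I) is) \<in> C"
    if "valid_sym s" and "arity s = length is" for s
    using C projs_is that unfolding subuniverse_def snd_FAI by (metis length_map)
  show "h \<in> C"
  proof (cases "is = []")
    case True
    then have "depends_on I h {}" using dep by simp
    then obtain a where "h = snd (Omega_pow (powA I)) (Cst a) []"
      by (rule depends_on_empty_eq_Cst[OF h])
    then show ?thesis using closed[of "Cst a"] True by simp
  next
    case False
    then obtain F where "valid_sym (Opr (length is) F)"
      and "h = snd (Omega_pow (powA I)) (Opr (length is) F) (map (proj I) is)"
      using depends_on_eq_Opr_projs[OF h dep] by blast
    then show ?thesis using closed[of "Opr (length is) F"] by simp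
  qed
qed

lemma Sg_FAI_projs:
  fixes I :: "'i set"
  shows "Sg (FAI I :: ('a, ('i \<Rightarrow> 'a) \<Rightarrow> 'a) alg) (proj I ` I) = fst (FAI I)"
proof (rule Sg_eqI[OF is_alg_FAI])
  show "proj I ` I \<subseteq> fst (FAI I)" by (rule image_subsetI) (rule proj_in_FAI)
  show "fst (FAI I) \<subseteq> C" if "subuniverse C (FAI I)" and "proj I ` I \<subseteq> C" for C :: "(('i \<Rightarrow> 'a) \<Rightarrow> 'a) set"
    using that by (rule FAI_subset_subuniverse)
qed

subsection \<open>The universal property\<close>

lemma hom_FAI_eqI:
  assumes "hom \<phi> (FAI I) B" and "hom \<phi>' (FAI I) B"
    and "\<forall>i\<in>I. \<phi> (proj I i) = \<phi>' (proj I i)"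
  shows "\<forall>h\<in>fst (FAI I). \<phi> h = \<phi>' h"
proof -
  have "fst (FAI I) \<subseteq> {h \<in> fst (FAI I). \<phi> h = \<phi>' h}"
  proof (rule FAI_subset_subuniverse)
    show "subuniverse {h \<in> fst (FAI I). \<phi> h = \<phi>' h} (FAI I)"
      by (rule subuniverse_equalizer_hom[OF is_alg_FAI assms(1,2)])
    show "proj I ` I \<subseteq> {h \<in> fst (FAI I). \<phi> h = \<phi>' h}"
      using assms(3) by (auto intro: proj_in_FAI)
  qed
  then show ?thesis by blast
qed

lemma hom_FAI_extends:
  fixes I :: "'i set" and B :: "('a, 'b) alg"
  assumes var: "in_var TYPE('j) B" and g: "\<forall>i\<in>I. g i \<in> fst B"
  obtains \<phi> where "\<phi> \<in> extensional (fst (FAI I))" and "hom \<phi> (FAI I) B"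
    and "\<forall>i\<in>I. \<phi> (proj I i) = g i"
proof -
  obtain J :: "'j set" and C \<psi> where C: "subuniverse C (Omega_pow J)"
    and \<psi>: "hom \<psi> (C, snd (Omega_pow J)) B" and onto: "\<psi> ` C = fst B"
    using var unfolding in_var_def by blast
  have "\<forall>i\<in>I. \<exists>x. x \<in> C \<and> \<psi> x = g i"
  proof
    fix i assume "i \<in> I"
    then have "g i \<in> \<psi> ` C" using g onto by simp
    then obtain x where "x \<in> C" and "g i = \<psi> x" by (rule imageE)
    then show "\<exists>x. x \<in> C \<and> \<psi> x = g i" by auto
  qed
  then obtain c where c: "\<forall>i\<in>I. c i \<in> C \<and> \<psi> (c i) = g i" by (rule bchoice[THEN exE])
  define \<theta> :: "(('i \<Rightarrow> 'a) \<Rightarrow> 'a) \<Rightarrow> 'j \<Rightarrow> 'a" where "\<theta> = (\<lambda>h. \<lambda>j\<in>J. h (\<lambda>i\<in>I. c i j))"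
  have hom_\<theta>: "hom \<theta> (FAI I) (Omega_pow J)"
    unfolding \<theta>_def FAI_eq by (rule hom_Omega_pow_precomp) (auto simp: powA_def)
  have \<theta>_proj: "\<theta> (proj I i) = c i" if "i \<in> I" for i
  proof
    fix j
    have "c i \<in> J \<rightarrow>\<^sub>E UNIV" using c that C unfolding subuniverse_def by auto
    then show "\<theta> (proj I i) j = c i j"
      using that unfolding \<theta>_def proj_def powA_def by (cases "j \<in> J") auto
  qed
  have "fst (FAI I) \<subseteq> {h \<in> fst (FAI I). \<theta> h \<in> C}"
  proof (rule FAI_subset_subuniverse)
    show "subuniverse {h \<in> fst (FAI I). \<theta> h \<in> C} (FAI I)"
      by (rule subuniverse_vimage_hom[OF is_alg_FAI hom_\<theta> C])
    show "proj I ` I \<subseteq> {h \<in> fst (FAI I). \<theta> h \<in> C}"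
      using c \<theta>_proj by (auto intro: proj_in_FAI)
  qed
  then have "hom \<theta> (FAI I) (C, snd (Omega_pow J))"
    by (intro hom_into_subuniverse[OF hom_\<theta>]) auto
  then have "hom (\<psi> \<circ> \<theta>) (FAI I) B" using \<psi> by (rule hom_comp)
  then have "hom (restrict (\<psi> \<circ> \<theta>) (fst (FAI I))) (FAI I) B"
    by (rule hom_restrict[OF is_alg_FAI])
  moreover have "\<forall>i\<in>I. restrict (\<psi> \<circ> \<theta>) (fst (FAI I)) (proj I i) = g i"
    using c \<theta>_proj by (simp add: proj_in_FAI)
  ultimately show ?thesis using that restrict_extensional by blast
qed

lemma FAI_universal:
  fixes I :: "'i set" and B :: "('a, 'b) alg"
  assumes "in_var TYPE('j) B" and "\<forall>i\<in>I. g i \<in> fst B"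
  shows "\<exists>!\<phi>. \<phi> \<in> extensional (fst (FAI I)) \<and> hom \<phi> (FAI I) B \<and> (\<forall>i\<in>I. \<phi> (proj I i) = g i)"
proof -
  obtain \<phi> where \<phi>: "\<phi> \<in> extensional (fst (FAI I))" "hom \<phi> (FAI I) B"
    "\<forall>i\<in>I. \<phi> (proj I i) = g i"
    using hom_FAI_extends[OF assms] by blast
  show ?thesis
  proof (rule ex1I[of _ \<phi>])
    fix \<phi>' assume \<phi>': "\<phi>' \<in> extensional (fst (FAI I)) \<and> hom \<phi>' (FAI I) B
        \<and> (\<forall>i\<in>I. \<phi>' (proj I i) = g i)"
    then have "\<forall>h\<in>fst (FAI I). \<phi>' h = \<phi> h"
      using \<phi> by (intro hom_FAI_eqI) auto
    then show "\<phi>' = \<phi>" using \<phi>(1) \<phi>' by (auto intro: extensionalityI)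
  qed (use \<phi> in blast)
qed

theorem mainTheorem4:
  fixes I :: "'i set"
  assumes "infinite (UNIV :: 'a set)"
  shows "(\<forall>i\<in>I. (proj I i :: ('i \<Rightarrow> 'a) \<Rightarrow> 'a) \<in> fst (FAI I :: ('a, ('i \<Rightarrow> 'a) \<Rightarrow> 'a) alg))
    \<and> in_var TYPE('i \<Rightarrow> 'a) (FAI I :: ('a, ('i \<Rightarrow> 'a) \<Rightarrow> 'a) alg)
    \<and> Sg (FAI I :: ('a, ('i \<Rightarrow> 'a) \<Rightarrow> 'a) alg) (proj I ` I) = fst (FAI I :: ('a, ('i \<Rightarrow> 'a) \<Rightarrow> 'a) alg)
    \<and> (\<forall>(B :: ('a, 'b) alg) (g :: 'i \<Rightarrow> 'b).
         in_var TYPE('j) B \<and> (\<forall>i\<in>I. g i \<in> fst B) \<longrightarrow>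
         (\<exists>!\<phi>. \<phi> \<in> extensional (fst (FAI I :: ('a, ('i \<Rightarrow> 'a) \<Rightarrow> 'a) alg))
               \<and> hom \<phi> (FAI I :: ('a, ('i \<Rightarrow> 'a) \<Rightarrow> 'a) alg) B
               \<and> (\<forall>i\<in>I. \<phi> (proj I i) = g i)))"
  by (intro conjI ballI allI impI proj_in_FAI FAI_in_var Sg_FAI_projs FAI_universal) auto

end
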